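(* Let $G=(V,E)$ be an undirected graph (finite or infinite) and let $X,Y$ be two ``strong'' partitive sets of $G$ with $X\cap Y=\emptyset$. Then there is at most one color class $\widehat A$ of $G$ containing an edge $(x,y)$ with $x\in X$ and $y\in Y$.
   Context: A graph $G=(V,E)$ has vertex set $V$ and edge set $E\subseteq V^2$; it is undirected if $E$ is irreflexive and symmetric. A set $X\subseteq V$ is a partitive set of $G$ if for all $a,b\in X$ and $c\in V\setminus X$: $(a,c)\in E\Leftrightarrow(b,c)\in E$ and $(c,a)\in E\Leftrightarrow(c,b)\in E$; $I(G)$ is the class of partitive sets. A ``strong'' partitive set is an $X\in I(G)$ such that for every $Y\in I(G)$ with $X\cap Y\neq\emptyset$, $X\subseteq Y$ or $Y\subseteq X$. Implication classes: on $E$ define $(a,b)\Gamma(a',b')$ iff either $a=a'$ and $(b,b')\notin E$, or $b=b'$ and $(a,a')\notin E$; the classes of the transitive closure $\Gamma^*$ are the implication classes. For an implication class $A$, $A^{-1}=\{(b,a):(a,b)\in A\}$ and the color class is $\widehat A=A\cup A^{-1}$. *)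

theory Defs
  imports Main
begin

definition undirected_graph :: "'a set \<Rightarrow> ('a \<times> 'a) set \<Rightarrow> bool" where
  "undirected_graph V E \<longleftrightarrow> E \<subseteq> V \<times> V \<and> irrefl E \<and> sym E"

definition partitive :: "'a set \<Rightarrow> ('a \<times> 'a) set \<Rightarrow> 'a set \<Rightarrow> bool" where
  "partitive V E X \<longleftrightarrow> X \<subseteq> V \<and>
     (\<forall>a\<in>X. \<forall>b\<in>X. \<forall>c\<in>V - X.
        ((a, c) \<in> E \<longleftrightarrow> (b, c) \<in> E) \<and> ((c, a) \<in> E \<longleftrightarrow> (c, b) \<in> E))"

definition strong_partitive :: "'a set \<Rightarrow> ('a \<times> 'a) set \<Rightarrow> 'a set \<Rightarrow> bool" where
  "strong_partitive V E X \<longleftrightarrow> partitive V E X \<and>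
     (\<forall>Y. partitive V E Y \<longrightarrow> X \<inter> Y \<noteq> {} \<longrightarrow> X \<subseteq> Y \<or> Y \<subseteq> X)"

definition Gamma :: "('a \<times> 'a) set \<Rightarrow> (('a \<times> 'a) \<times> ('a \<times> 'a)) set" where
  "Gamma E = {((a, b), (a', b')). (a, b) \<in> E \<and> (a', b') \<in> E \<and>
     ((a = a' \<and> (b, b') \<notin> E) \<or> (b = b' \<and> (a, a') \<notin> E))}"

definition implication_class :: "('a \<times> 'a) set \<Rightarrow> ('a \<times> 'a) set \<Rightarrow> bool" where
  "implication_class E A \<longleftrightarrow> A \<in> E // (Gamma E)\<^sup>+"

definition color_class :: "('a \<times> 'a) set \<Rightarrow> ('a \<times> 'a) set" where
  "color_class A = A \<union> A\<inverse>"

end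

theory Submission
  imports Defs
begin

text \<open>Let X be strong partitive, x, x' \<in> X and y \<notin> X adjacent to x. If (x, y) and (x', y) lay in
  different implication classes, the vertices z \<in> X with (z, y) implied by (x, y), together with the
  component of y in the complement graph on the outer neighbourhood of X, would form a partitive set
  meeting X without being comparable to it. So all edges from X to a fixed outside vertex are
  implied by each other. Applied to X and to Y this links any two edges between X and Y; and since
  reversing edges maps implication classes to implication classes, the colour class of an edge
  depends only on its implication class.\<close>

lemma Gamma_subset: "Gamma E \<subseteq> E \<times> E"
  unfolding Gamma_def by auto

lemma Gamma_refl: "irrefl E \<Longrightarrow> p \<in> E \<Longrightarrow> (p, p) \<in> Gamma E"
  unfolding Gamma_def irrefl_def by (cases p) auto

lemma sym_Gamma: "sym E \<Longrightarrow> sym (Gamma E)"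
  unfolding Gamma_def sym_def by auto

lemma Gamma_swap: "sym E \<Longrightarrow> (p, q) \<in> Gamma E \<Longrightarrow> (prod.swap p, prod.swap q) \<in> Gamma E"
  unfolding Gamma_def sym_def by (cases p, cases q) auto

lemma trancl_Gamma_swap:
  assumes "sym E" and "(p, q) \<in> (Gamma E)\<^sup>+"
  shows "(prod.swap p, prod.swap q) \<in> (Gamma E)\<^sup>+"
  using assms(2)
proof (induction rule: trancl_induct)
  case (base q)
  then show ?case using Gamma_swap[OF assms(1)] by blast
next
  case (step q r)
  then show ?case using Gamma_swap[OF assms(1)] by (meson trancl.trancl_into_trancl)
qed

lemma equiv_Gamma_trancl:
  assumes "irrefl E" and "sym E"
  shows "equiv E ((Gamma E)\<^sup>+)"
proof (rule equivI)
  show "(Gamma E)\<^sup>+ \<subseteq> E \<times> E" using Gamma_subset by (rule trancl_subset_Sigma)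
  show "refl_on E ((Gamma E)\<^sup>+)"
    using Gamma_subset Gamma_refl[OF assms(1)] by (intro refl_onI) (auto intro: trancl_subset_Sigma)
  show "sym ((Gamma E)\<^sup>+)" using sym_Gamma[OF assms(2)] by (rule sym_trancl)
qed (rule trans_trancl)

lemma converse_Gamma_class:
  assumes "sym E"
  shows "((Gamma E)\<^sup>+ `` {p})\<inverse> = (Gamma E)\<^sup>+ `` {prod.swap p}"
  using trancl_Gamma_swap[OF assms, of p] trancl_Gamma_swap[OF assms, of "prod.swap p"] by fastforce

lemma color_class_eq_Gamma_class:
  assumes "irrefl E" and "sym E" and "implication_class E A" and "p \<in> color_class A"
  shows "color_class A = (Gamma E)\<^sup>+ `` {p} \<union> (Gamma E)\<^sup>+ `` {prod.swap p}"
proof -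
  let ?T = "(Gamma E)\<^sup>+"
  have equiv: "equiv E ?T" using equiv_Gamma_trancl[OF assms(1,2)] .
  obtain e where A: "A = ?T `` {e}"
    using assms(3) unfolding implication_class_def by (auto elim: quotientE)
  have "p \<in> ?T `` {e} \<or> prod.swap p \<in> ?T `` {e}"
    using assms(4) unfolding color_class_def A by (cases p) auto
  then have "?T `` {e} = ?T `` {p} \<or> ?T `` {e} = ?T `` {prod.swap p}"
    using equiv_class_eq[OF equiv] by blast
  moreover have swap: "?T `` {prod.swap r} = (?T `` {r})\<inverse>" for r
    using converse_Gamma_class[OF assms(2)] by simp
  moreover have "color_class A = ?T `` {e} \<union> ?T `` {prod.swap e}"
    unfolding color_class_def A swap ..
  ultimately show ?thesis
    by (elim disjE) (simp_all add: swap Un_commute)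
qed

lemma color_class_eq_if_Gamma_trancl:
  assumes "irrefl E" and "sym E" and "implication_class E A" and "implication_class E B"
    and "p \<in> color_class A" and "q \<in> color_class B" and "(p, q) \<in> (Gamma E)\<^sup>+"
  shows "color_class A = color_class B"
proof -
  have "(Gamma E)\<^sup>+ `` {p} = (Gamma E)\<^sup>+ `` {q}"
    using equiv_class_eq[OF equiv_Gamma_trancl[OF assms(1,2)] assms(7)] .
  then have "(Gamma E)\<^sup>+ `` {prod.swap p} = (Gamma E)\<^sup>+ `` {prod.swap q}"
    by (metis converse_Gamma_class[OF assms(2)])
  with \<open>(Gamma E)\<^sup>+ `` {p} = (Gamma E)\<^sup>+ `` {q}\<close> show ?thesis
    using color_class_eq_Gamma_class[OF assms(1-3,5)] color_class_eq_Gamma_class[OF assms(1,2,4,6)]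
    by simp
qed

lemma color_class_subset:
  assumes "sym E" and "implication_class E A"
  shows "color_class A \<subseteq> E"
proof -
  have "A \<subseteq> E"
    using assms(2) trancl_subset_Sigma[OF Gamma_subset]
    unfolding implication_class_def by (auto elim!: quotientE)
  with assms(1) show ?thesis unfolding color_class_def by (auto dest: symD)
qed

lemma partitiveI_sym:
  assumes "sym E" and "M \<subseteq> V"
    and "\<And>a c. a \<in> M \<Longrightarrow> c \<in> V - M \<Longrightarrow> (a, c) \<in> E \<longleftrightarrow> c \<in> P"
  shows "partitive V E M"
  unfolding partitive_def using assms by (metis symD)

definition complement_edges :: "'a set \<Rightarrow> ('a \<times> 'a) set \<Rightarrow> ('a \<times> 'a) set" where
  "complement_edges S E = {(u, v). u \<in> S \<and> v \<in> S \<and> (u, v) \<notin> E}"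

lemma Gamma_trancl_along_complement_path:
  assumes "irrefl E" and "\<And>v. v \<in> S \<Longrightarrow> (a, v) \<in> E"
    and "(u, w) \<in> (complement_edges S E)\<^sup>*" and "u \<in> S"
  shows "((a, u), (a, w)) \<in> (Gamma E)\<^sup>+"
  using assms(3)
proof (induction rule: rtrancl_induct)
  case base
  show ?case using Gamma_refl[OF assms(1)] assms(2,4) by blast
next
  case (step v w)
  then have "((a, v), (a, w)) \<in> Gamma E"
    using assms(2) unfolding complement_edges_def Gamma_def by auto
  with step.IH show ?case by (rule trancl_into_trancl)
qed

locale Gamma_unrelated_edges =
  fixes V :: "'a set" and E :: "('a \<times> 'a) set" and X :: "'a set" and x x' y :: 'a
  assumes undirected: "undirected_graph V E"
    and partitive_X: "partitive V E X"
    and x_in_X: "x \<in> X" and x'_in_X: "x' \<in> X"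
    and y_outside: "y \<in> V - X"
    and edge_xy: "(x, y) \<in> E"
    and unrelated: "((x, y), (x', y)) \<notin> (Gamma E)\<^sup>+"
begin

lemma irrefl_E: "irrefl E" and sym_E: "sym E"
  using undirected unfolding undirected_graph_def by auto

definition outer_nbrs :: "'a set" where
  "outer_nbrs = {v \<in> V - X. (x, v) \<in> E}"

lemma adj_outer_nbrs: "z \<in> X \<Longrightarrow> v \<in> outer_nbrs \<Longrightarrow> (z, v) \<in> E"
  using partitive_X x_in_X unfolding partitive_def outer_nbrs_def by blast

lemma adj_outside_iff: "z \<in> X \<Longrightarrow> c \<in> V - X \<Longrightarrow> (z, c) \<in> E \<longleftrightarrow> c \<in> outer_nbrs"
  using partitive_X x_in_X unfolding partitive_def outer_nbrs_def by blast

lemma y_in_outer_nbrs: "y \<in> outer_nbrs"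
  using y_outside edge_xy unfolding outer_nbrs_def by blast

definition co_component :: "'a set" where
  "co_component = (complement_edges outer_nbrs E)\<^sup>* `` {y}"

lemma y_in_co_component: "y \<in> co_component"
  unfolding co_component_def by blast

lemma co_component_subset: "co_component \<subseteq> outer_nbrs"
  using y_in_outer_nbrs unfolding co_component_def complement_edges_def
  by (auto elim: rtranclE)

lemma co_component_Gamma: "z \<in> X \<Longrightarrow> v \<in> co_component \<Longrightarrow> ((z, y), (z, v)) \<in> (Gamma E)\<^sup>+"
  using Gamma_trancl_along_complement_path[OF irrefl_E adj_outer_nbrs] y_in_outer_nbrs
  unfolding co_component_def by blast

lemma co_component_closed:
  assumes "a \<in> co_component" and "c \<in> outer_nbrs - co_component"
  shows "(a, c) \<in> E"
proof (rule ccontr)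
  assume "(a, c) \<notin> E"
  then have "(a, c) \<in> complement_edges outer_nbrs E"
    using assms co_component_subset unfolding complement_edges_def by blast
  then have "c \<in> co_component"
    using assms(1) unfolding co_component_def by (blast intro: rtrancl_into_rtrancl)
  with assms(2) show False by blast
qed

definition related_part :: "'a set" where
  "related_part = {z \<in> X. ((x, y), (z, y)) \<in> (Gamma E)\<^sup>+}"

lemma related_part_closed:
  assumes "a \<in> related_part" and "c \<in> X - related_part"
  shows "(a, c) \<in> E"
proof (rule ccontr)
  assume "(a, c) \<notin> E"
  then have "((a, y), (c, y)) \<in> Gamma E"
    using assms adj_outer_nbrs[OF _ y_in_outer_nbrs]
    unfolding related_part_def Gamma_def by auto
  then have "c \<in> related_part"
    using assms unfolding related_part_def by (blast intro: trancl_into_trancl)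
  with assms(2) show False by blast
qed

text \<open>A neighbour c of the co-component outside X and its outer neighbours would link
  (x, a) and (x', a) by the two Gamma steps through (c, a), hence (x, y) and (x', y).\<close>
lemma co_component_no_far_nbrs:
  assumes a: "a \<in> co_component" and c: "c \<in> V - X - outer_nbrs"
  shows "(a, c) \<notin> E"
proof
  assume "(a, c) \<in> E"
  then have ca: "(c, a) \<in> E" by (rule symD[OF sym_E])
  have a_nbr: "a \<in> outer_nbrs" using a co_component_subset by blast
  have "(x, c) \<notin> E" and "(c, x') \<notin> E"
    using c adj_outside_iff[OF x_in_X] adj_outside_iff[OF x'_in_X] sym_E by (auto dest: symD)
  then have xa_ca: "((x, a), (c, a)) \<in> Gamma E" and ca_x'a: "((c, a), (x', a)) \<in> Gamma E"
    using ca adj_outer_nbrs[OF x_in_X a_nbr] adj_outer_nbrs[OF x'_in_X a_nbr]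
    unfolding Gamma_def by auto
  have xy_xa: "((x, y), (x, a)) \<in> (Gamma E)\<^sup>+"
    using co_component_Gamma[OF x_in_X a] .
  have x'a_x'y: "((x', a), (x', y)) \<in> (Gamma E)\<^sup>+"
    using co_component_Gamma[OF x'_in_X a] sym_trancl[OF sym_Gamma[OF sym_E]] by (blast dest: symD)
  have "((x, y), (x', y)) \<in> (Gamma E)\<^sup>+"
    using trancl_trans[OF trancl_into_trancl[OF trancl_into_trancl[OF xy_xa xa_ca] ca_x'a] x'a_x'y] .
  with unrelated show False ..
qed

definition witness :: "'a set" where
  "witness = related_part \<union> co_component"

lemma witness_adj_iff:
  assumes a: "a \<in> witness" and c: "c \<in> V - witness"
  shows "(a, c) \<in> E \<longleftrightarrow> c \<in> X \<union> outer_nbrs"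
proof (cases "a \<in> related_part")
  case True
  then have "a \<in> X" unfolding related_part_def by blast
  show ?thesis
  proof (cases "c \<in> X")
    case True
    with \<open>a \<in> related_part\<close> c show ?thesis
      using related_part_closed unfolding witness_def by blast
  next
    case False
    with \<open>a \<in> X\<close> c show ?thesis using adj_outside_iff by blast
  qed
next
  case False
  then have a_co: "a \<in> co_component" using a unfolding witness_def by blast
  then have a_nbr: "a \<in> outer_nbrs" using co_component_subset by blast
  consider "c \<in> X" | "c \<in> outer_nbrs - co_component" | "c \<in> V - X - outer_nbrs"
    using c unfolding witness_def by blast
  then show ?thesis
  proof cases
    case 1
    then show ?thesis using adj_outer_nbrs[OF _ a_nbr] symD[OF sym_E] by blast
  next
    case 2
    then show ?thesis using co_component_closed[OF a_co] by blast
  next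
    case 3
    then show ?thesis using co_component_no_far_nbrs[OF a_co] by blast
  qed
qed

lemma partitive_witness: "partitive V E witness"
proof (rule partitiveI_sym[OF sym_E _ witness_adj_iff])
  have "X \<subseteq> V" using partitive_X unfolding partitive_def by blast
  then show "witness \<subseteq> V"
    using co_component_subset unfolding witness_def related_part_def outer_nbrs_def by blast
qed

lemma not_strong_partitive: "\<not> strong_partitive V E X"
proof
  assume "strong_partitive V E X"
  moreover have "x \<in> X \<inter> witness"
    using x_in_X r_into_trancl[OF Gamma_refl[OF irrefl_E edge_xy]]
    unfolding witness_def related_part_def by blast
  ultimately have "X \<subseteq> witness \<or> witness \<subseteq> X"
    using partitive_witness unfolding strong_partitive_def by blast
  moreover have "x' \<notin> witness"
    using unrelated x'_in_X co_component_subset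
    unfolding witness_def related_part_def outer_nbrs_def by blast
  moreover have "y \<in> witness - X"
    using y_in_co_component y_outside unfolding witness_def by blast
  ultimately show False using x'_in_X by blast
qed

end

lemma strong_partitive_Gamma_trancl:
  assumes "undirected_graph V E" and "strong_partitive V E X"
    and "x \<in> X" and "x' \<in> X" and "y \<in> V - X" and "(x, y) \<in> E"
  shows "((x, y), (x', y)) \<in> (Gamma E)\<^sup>+"
proof (rule ccontr)
  assume unrelated: "((x, y), (x', y)) \<notin> (Gamma E)\<^sup>+"
  have "partitive V E X" using assms(2) unfolding strong_partitive_def by blast
  then interpret Gamma_unrelated_edges V E X x x' y
    by (rule Gamma_unrelated_edges.intro[OF assms(1) _ assms(3-6) unrelated])
  from not_strong_partitive assms(2) show False by contradiction
qed

lemma edges_between_strong_partitive_Gamma_trancl: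
  assumes undirected: "undirected_graph V E"
    and X: "strong_partitive V E X" and Y: "strong_partitive V E Y" and disjoint: "X \<inter> Y = {}"
    and "x \<in> X" "x' \<in> X" "y \<in> Y" "y' \<in> Y"
    and "(x, y) \<in> E" "(x', y') \<in> E"
  shows "((x, y), (x', y')) \<in> (Gamma E)\<^sup>+"
proof -
  have "irrefl E" and "sym E" and "E \<subseteq> V \<times> V"
    using undirected unfolding undirected_graph_def by auto
  have "((y, x), (y', x)) \<in> (Gamma E)\<^sup>+"
    using strong_partitive_Gamma_trancl[OF undirected Y] assms(5-9) disjoint
      \<open>sym E\<close> \<open>E \<subseteq> V \<times> V\<close> by (blast dest: symD)
  then have xy_xy': "((x, y), (x, y')) \<in> (Gamma E)\<^sup>+"
    using trancl_Gamma_swap[OF \<open>sym E\<close>] by fastforce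
  have "((x', y'), (x, y')) \<in> (Gamma E)\<^sup>+"
    using strong_partitive_Gamma_trancl[OF undirected X] assms(5-8,10) disjoint
      \<open>E \<subseteq> V \<times> V\<close> by blast
  then have "((x, y'), (x', y')) \<in> (Gamma E)\<^sup>+"
    using sym_trancl[OF sym_Gamma[OF \<open>sym E\<close>]] by (rule symD[rotated])
  with xy_xy' show ?thesis by (rule trancl_trans)
qed

theorem theorem3p4:
  fixes V :: "'a set" and E :: "('a \<times> 'a) set" and X Y :: "'a set"
  assumes "undirected_graph V E"
    and "strong_partitive V E X" and "strong_partitive V E Y"
    and "X \<inter> Y = {}"
  shows "
    \<forall>A B. implication_class E A \<longrightarrow> implication_class E B \<longrightarrow>
      (\<exists>x\<in>X. \<exists>y\<in>Y. (x, y) \<in> color_class A) \<longrightarrow>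
      (\<exists>x\<in>X. \<exists>y\<in>Y. (x, y) \<in> color_class B) \<longrightarrow>
      color_class A = color_class B"
proof (intro allI impI)
  fix A B
  assume A: "implication_class E A" and B: "implication_class E B"
    and "\<exists>x\<in>X. \<exists>y\<in>Y. (x, y) \<in> color_class A" "\<exists>x\<in>X. \<exists>y\<in>Y. (x, y) \<in> color_class B"
  then obtain x y x' y' where "x \<in> X" "y \<in> Y" "x' \<in> X" "y' \<in> Y"
    and xy: "(x, y) \<in> color_class A" and x'y': "(x', y') \<in> color_class B" by blast
  have "irrefl E" and "sym E" using assms(1) unfolding undirected_graph_def by auto
  have "(x, y) \<in> E" and "(x', y') \<in> E"
    using color_class_subset[OF \<open>sym E\<close> A] color_class_subset[OF \<open>sym E\<close> B] xy x'y' by blast+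
  with \<open>x \<in> X\<close> \<open>x' \<in> X\<close> \<open>y \<in> Y\<close> \<open>y' \<in> Y\<close>
  have "((x, y), (x', y')) \<in> (Gamma E)\<^sup>+"
    by (rule edges_between_strong_partitive_Gamma_trancl[OF assms])
  then show "color_class A = color_class B"
    by (rule color_class_eq_if_Gamma_trancl[OF \<open>irrefl E\<close> \<open>sym E\<close> A B xy x'y'])
qed

end
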